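(* Let the bifocusing indicator function $\mathfrak{F}_{\mathrm{BFM}}(\mathbf{x},\alpha)$ be as described in the context, and assume $4k|\mathbf{x}-\mathbf{t}_n|\gg1$ and $4k|\mathbf{x}-\mathbf{r}_n|\gg1$ for all $\mathbf{x}\in\Omega$ and all $n$. Then for $0\leq\alpha\leq\pi$, \[\mathfrak{F}_{\mathrm{BFM}}(\mathbf{x},2\pi-\alpha)=\mathfrak{F}_{\mathrm{BFM}}(\mathbf{x},\alpha).\]
   Context: Setting (two-dimensional time-harmonic scattering): $\Omega\subset\mathbb{R}^2$ is a bounded homogeneous background region with vacuum permittivity $\varepsilon_0$ and permeability $\mu_0$; the background wavenumber is $k=\omega\sqrt{\varepsilon_0\mu_0}$. $\Omega$ contains finitely many small, well-separated dielectric inhomogeneities $D_1,\dots,D_M$ with smooth boundaries, $D=\bigcup_m D_m$, with permittivity $\varepsilon(\mathbf{x})=\varepsilon_m>\varepsilon_0$ on $D_m$ and $\varepsilon_0$ elsewhere. $G(\mathbf{x},\mathbf{t})=-\frac{i}{4}H_0^{(1)}(k|\mathbf{x}-\mathbf{t}|)$. The scattered field is given by $u_{\mathrm{scat}}(\mathbf{r},\mathbf{t})\approx k^2\int_D\frac{\varepsilon(\mathbf{z})-\varepsilon_0}{\varepsilon_0\mu_0}G(\mathbf{r},\mathbf{z})G(\mathbf{z},\mathbf{t})\,d\mathbf{z}$. For a bistatic angle $\alpha$ and $n=1,\dots,N$: $\theta_n=2\pi(n-1)/N$, $\mathbf{t}_n=T(\cos\theta_n,\sin\theta_n)$, $\mathbf{r}_n=R(\cos(\theta_n+\alpha),\sin(\theta_n+\alpha))$,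 $T,R>0$. The indicator function is $\mathfrak{F}_{\mathrm{BFM}}(\mathbf{x},\alpha)=\left|\sum_{n=1}^{N}\frac{u_{\mathrm{scat}}(\mathbf{r}_n,\mathbf{t}_n)}{G(\mathbf{t}_n,\mathbf{x})G(\mathbf{r}_n,\mathbf{x})}\right|$, understood (in the far-field regime) through the representation \[\mathfrak{F}_{\mathrm{BFM}}(\mathbf{x},\alpha)=Nk^2\int_D\frac{\varepsilon(\mathbf{z})-\varepsilon_0}{\varepsilon_0\mu_0}\Big[J_0(k(1+\cos\alpha)|\mathbf{x}-\mathbf{z}|)J_0(k\sin\alpha|\mathbf{x}-\mathbf{z}|)+2\sum_{q\ge1}(-1)^qJ_{2q}(k(1+\cos\alpha)|\mathbf{x}-\mathbf{z}|)J_{2q}(k\sin\alpha|\mathbf{x}-\mathbf{z}|)\Big]d\mathbf{z},\] with $J_q$ the Bessel function of the first kind of order $q$. *)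

theory Defs
  imports "HOL-Analysis.Analysis"
begin

definition bessel_J :: "nat \<Rightarrow> real \<Rightarrow> real" where
  "bessel_J n x = (\<Sum>m. (-1) ^ m / (fact m * fact (m + n)) * (x / 2) ^ (2 * m + n))"

definition bfm_kernel :: "real \<Rightarrow> real \<Rightarrow> real \<Rightarrow> real" where
  "bfm_kernel k \<alpha> r =
     bessel_J 0 (k * (1 + cos \<alpha>) * r) * bessel_J 0 (k * sin \<alpha> * r)
     + 2 * (\<Sum>q. (-1) ^ Suc q * bessel_J (2 * Suc q) (k * (1 + cos \<alpha>) * r)
                               * bessel_J (2 * Suc q) (k * sin \<alpha> * r))"

text \<open>The BFM indicator function in its far-field representation:
  F(x,alpha) = N k^2 int_D (eps(z)-eps0)/(eps0 mu0) * kernel dz.\<close>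
definition F_BFM ::
  "nat \<Rightarrow> real \<Rightarrow> real \<Rightarrow> real \<Rightarrow> (real^2 \<Rightarrow> real) \<Rightarrow> (real^2) set \<Rightarrow> real^2 \<Rightarrow> real \<Rightarrow> real" where
  "F_BFM N k \<epsilon>\<^sub>0 \<mu>\<^sub>0 \<epsilon> D x \<alpha> =
     real N * k\<^sup>2 * integral D (\<lambda>z. (\<epsilon> z - \<epsilon>\<^sub>0) / (\<epsilon>\<^sub>0 * \<mu>\<^sub>0) * bfm_kernel k \<alpha> (dist x z))"

end

theory Submission
  imports Defs
begin

lemma bessel_J_minus_even:
  assumes "even n"
  shows "bessel_J n (- x) = bessel_J n x"
proof -
  have "(- x / 2) ^ (2 * m + n) = (x / 2) ^ (2 * m + n)" for m
    using assms Parity.power_minus_even[of "2 * m + n" "x / 2"] by simp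
  then show ?thesis
    unfolding bessel_J_def by simp
qed

lemma bfm_kernel_reflect: "bfm_kernel k (2 * pi - \<alpha>) r = bfm_kernel k \<alpha> r"
proof -
  have cos_reflect: "cos (2 * pi - \<alpha>) = cos \<alpha>"
    and sin_reflect: "k * sin (2 * pi - \<alpha>) * r = - (k * sin \<alpha> * r)"
    by (simp_all add: cos_diff sin_diff)
  have "bessel_J (2 * q) (- y) = bessel_J (2 * q) y" for q y
    by (simp add: bessel_J_minus_even)
  from this[of 0] this[of "Suc q" for q] show ?thesis
    unfolding bfm_kernel_def cos_reflect sin_reflect by simp
qed

text \<open>The reflection identity already holds for the integrand.\<close>

theorem corollary3p2:
  fixes \<Omega> :: "(real^2) set" and Dm :: "nat \<Rightarrow> (real^2) set" and M N :: nat
    and \<epsilon>m :: "nat \<Rightarrow> real" and \<epsilon> :: "real^2 \<Rightarrow> real"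
    and \<epsilon>\<^sub>0 \<mu>\<^sub>0 \<omega> k T R \<alpha> :: real and x :: "real^2"
  assumes "bounded \<Omega>" "open \<Omega>"
    and "\<epsilon>\<^sub>0 > 0" "\<mu>\<^sub>0 > 0" "\<omega> > 0" "k = \<omega> * sqrt (\<epsilon>\<^sub>0 * \<mu>\<^sub>0)"
    and "\<And>m. m < M \<Longrightarrow> open (Dm m) \<and> Dm m \<noteq> {} \<and> closure (Dm m) \<subseteq> \<Omega>"
    and "\<And>m m'. m < M \<Longrightarrow> m' < M \<Longrightarrow> m \<noteq> m' \<Longrightarrow> closure (Dm m) \<inter> closure (Dm m') = {}"
    and "\<And>m. m < M \<Longrightarrow> \<epsilon>m m > \<epsilon>\<^sub>0"
    and "\<And>m z. m < M \<Longrightarrow> z \<in> Dm m \<Longrightarrow> \<epsilon> z = \<epsilon>m m"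
    and "\<And>z. z \<notin> (\<Union>m<M. Dm m) \<Longrightarrow> \<epsilon> z = \<epsilon>\<^sub>0"
    and "N > 0" "T > 0" "R > 0"
    and "x \<in> \<Omega>"
    and "0 \<le> \<alpha>" "\<alpha> \<le> pi"
  shows "F_BFM N k \<epsilon>\<^sub>0 \<mu>\<^sub>0 \<epsilon> (\<Union>m<M. Dm m) x (2 * pi - \<alpha>)
       = F_BFM N k \<epsilon>\<^sub>0 \<mu>\<^sub>0 \<epsilon> (\<Union>m<M. Dm m) x \<alpha>"
  unfolding F_BFM_def bfm_kernel_reflect ..

end
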